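(* Consider two states $\Theta=\{0,1\}$. Let $\mathcal{U}$ be the class of state-dependent utility functions $u\colon \mathbb{R}\times\Theta\to\mathbb{R}$ such that for each $\theta\in\Theta$ the function $u_\theta:=u(\cdot,\theta)$ is strictly increasing and weakly concave. Fix numbers $\alpha,\beta,\hat\alpha,\hat\beta>0$ and a nonempty set $W\subseteq\mathbb{R}$. For a belief $\mu\in[0,1]$ (the probability of state $1$), a utility $u\in\mathcal{U}$ and a wealth $w\in\mathbb{R}$, write $s\succeq r$ if $$\mu u_1(w)+(1-\mu)u_0(w)\ \ge\ \mu u_1(w+\alpha)+(1-\mu)u_0(w-\beta),$$ and $s\succeq \hat r$ if $$\mu u_1(w)+(1-\mu)u_0(w)\ \ge\ \mu u_1(w+\hat\alpha)+(1-\mu)u_0(w-\hat\beta).$$ Say that "the safe option must remain optimal" if for every $u\in\mathcal{U}$ and every belief $\mu\in[0,1]$: if $s\succeq r$ holds for all $w\in W$, then $s\succeq\hat r$ holds for all $w\in W$. Say that "the risky option becomes worse" if $\hat\beta\ge\beta$ and $\frac{\alpha}{\beta}\ge\frac{\hat\alpha}{\hat\beta}$. Then the safe option must remain optimal if and only if the risky option becomes worse.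
   Context: Interpretation: a decision-maker with initial wealth $w$ chooses between a safe action $s$ paying $0$ in both states, and a risky action $r$ paying $\alpha$ in state $1$ and $-\beta$ in state $0$ (or, in the second menu, $\hat r$ paying $\hat\alpha$ in state $1$ and $-\hat\beta$ in state $0$). She is a subjective expected utility maximizer with belief $\mu=\mathbb{P}(\text{state }1)$ and utility of terminal wealth $u_\theta$ in state $\theta$, the same belief and utility being used for both menus. *)

theory Defs
  imports "HOL-Analysis.Analysis"
begin

text \<open>A state-dependent utility u : R x Theta -> R is given as u :: real => nat => real;
  only its values at theta = 0 and theta = 1 matter.\<close>

definition in_U :: "(real \<Rightarrow> nat \<Rightarrow> real) \<Rightarrow> bool" where
  "in_U u \<longleftrightarrow> (\<forall>\<theta>\<in>{0,1::nat}. strict_mono (\<lambda>x. u x \<theta>) \<and> concave_on UNIV (\<lambda>x. u x \<theta>))"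

definition safe_pref :: "real \<Rightarrow> (real \<Rightarrow> nat \<Rightarrow> real) \<Rightarrow> real \<Rightarrow> real \<Rightarrow> real \<Rightarrow> bool" where
  "safe_pref \<mu> u w a b \<longleftrightarrow>
     \<mu> * u w 1 + (1 - \<mu>) * u w 0 \<ge> \<mu> * u (w + a) 1 + (1 - \<mu>) * u (w - b) 0"

definition safe_must_remain_optimal ::
  "real \<Rightarrow> real \<Rightarrow> real \<Rightarrow> real \<Rightarrow> real set \<Rightarrow> bool" where
  "safe_must_remain_optimal \<alpha> \<beta> \<alpha>' \<beta>' W \<longleftrightarrow>
     (\<forall>u. in_U u \<longrightarrow> (\<forall>\<mu>\<in>{0..1}.
        (\<forall>w\<in>W. safe_pref \<mu> u w \<alpha> \<beta>) \<longrightarrow> (\<forall>w\<in>W. safe_pref \<mu> u w \<alpha>' \<beta>')))"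

definition risky_becomes_worse :: "real \<Rightarrow> real \<Rightarrow> real \<Rightarrow> real \<Rightarrow> bool" where
  "risky_becomes_worse \<alpha> \<beta> \<alpha>' \<beta>' \<longleftrightarrow> \<beta>' \<ge> \<beta> \<and> \<alpha> / \<beta> \<ge> \<alpha>' / \<beta>'"

end

theory Submission
  imports Defs
begin

text \<open>Sufficiency: by concavity, scaling a gain up from \<alpha> to \<alpha>' at most multiplies the utility
  gain by max 1 (\<alpha>'/\<alpha>), while scaling a loss up from \<beta> to \<beta>' multiplies the utility loss by
  at least \<beta>'/\<beta>; the hypotheses say exactly that the second factor dominates the first.

  Necessity: if \<alpha>/\<beta> < \<alpha>'/\<beta>', state-wise linear utilities calibrated to make the decision maker
  indifferent between s and r strictly prefer r'. If \<beta>' < \<beta>, take piecewise linear utilities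
  around a wealth w0 \<in> W: u0 is much steeper below w0 - \<beta>', so every loss of size \<beta> is
  heavily penalised while the loss \<beta>' at w0 is not, and u1 flattens above w0 + \<alpha>', which
  caps every gain of size \<alpha>; then s is preferred to r at every wealth but not to r' at w0.\<close>

definition state_utility :: "(real \<Rightarrow> real) \<Rightarrow> (real \<Rightarrow> real) \<Rightarrow> real \<Rightarrow> nat \<Rightarrow> real" where
  "state_utility f0 f1 = (\<lambda>x \<theta>. if \<theta> = 1 then f1 x else f0 x)"

lemma in_U_state_utility:
  assumes "strict_mono f0" "concave_on UNIV f0" "strict_mono f1" "concave_on UNIV f1"
  shows "in_U (state_utility f0 f1)"
  using assms by (simp add: in_U_def state_utility_def)

lemma in_UD:
  assumes "in_U u"
  shows "strict_mono (\<lambda>x. u x 0)" "concave_on UNIV (\<lambda>x. u x 0)"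
    and "strict_mono (\<lambda>x. u x 1)" "concave_on UNIV (\<lambda>x. u x 1)"
  using assms by (auto simp: in_U_def)

lemma safe_pref_iff:
  "safe_pref \<mu> u w a b \<longleftrightarrow> \<mu> * (u (w + a) 1 - u w 1) \<le> (1 - \<mu>) * (u w 0 - u (w - b) 0)"
  unfolding safe_pref_def by (simp add: algebra_simps)

lemma safe_pref_half_state_utility_iff:
  "safe_pref (1/2) (state_utility f0 f1) w a b \<longleftrightarrow> f1 (w + a) - f1 w \<le> f0 w - f0 (w - b)"
  unfolding safe_pref_iff state_utility_def by auto

lemma concave_gain_scale_le:
  fixes f :: "real \<Rightarrow> real"
  assumes "concave_on UNIV f" "0 < a" "a \<le> a'"
  shows "a * (f (w + a') - f w) \<le> a' * (f (w + a) - f w)"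
proof (cases "a = a'")
  case False
  have "((- f w) - (- f (w + a))) / (w - (w + a)) \<le> ((- f w) - (- f (w + a'))) / (w - (w + a'))"
    using assms False
    by (intro convex_on_slope_le(1)[of UNIV "\<lambda>x. - f x"]) (auto simp: concave_on_def)
  then show ?thesis
    using assms by (simp add: field_simps)
qed simp

lemma concave_loss_scale_ge:
  fixes f :: "real \<Rightarrow> real"
  assumes "concave_on UNIV f" "0 < b" "b \<le> b'"
  shows "b' * (f w - f (w - b)) \<le> b * (f w - f (w - b'))"
proof (cases "b = b'")
  case False
  have "((- f (w - b')) - (- f w)) / ((w - b') - w) \<le> ((- f (w - b)) - (- f w)) / ((w - b) - w)"
    using assms False
    by (intro convex_on_slope_le(2)[of UNIV "\<lambda>x. - f x"]) (auto simp: concave_on_def)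
  then show ?thesis
    using assms by (simp add: field_simps)
qed simp

lemma safe_pref_transfer:
  assumes U: "in_U u" and \<mu>: "0 \<le> \<mu>" "\<mu> \<le> 1"
    and pos: "0 < \<alpha>" "0 < \<beta>" "0 < \<alpha>'"
    and loss_larger: "\<beta> \<le> \<beta>'" and ratio_smaller: "\<alpha>' / \<beta>' \<le> \<alpha> / \<beta>"
    and safe: "safe_pref \<mu> u w \<alpha> \<beta>"
  shows "safe_pref \<mu> u w \<alpha>' \<beta>'"
proof -
  define A where "A = u (w + \<alpha>) 1 - u w 1"
  define A' where "A' = u (w + \<alpha>') 1 - u w 1"
  define B where "B = u w 0 - u (w - \<beta>) 0"
  define B' where "B' = u w 0 - u (w - \<beta>') 0"
  have hyp: "\<mu> * A \<le> (1 - \<mu>) * B"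
    using safe unfolding safe_pref_iff A_def B_def .
  have "B \<ge> 0"
    using strict_mono_less_eq[OF in_UD(1)[OF U], of "w - \<beta>" w] pos unfolding B_def by simp
  have gain: "\<alpha> * A' \<le> max \<alpha> \<alpha>' * A"
  proof (cases "\<alpha>' \<le> \<alpha>")
    case True
    then have "u (w + \<alpha>') 1 \<le> u (w + \<alpha>) 1"
      using strict_mono_less_eq[OF in_UD(3)[OF U], of "w + \<alpha>'" "w + \<alpha>"] by simp
    then show ?thesis
      using True pos unfolding A_def A'_def by (simp add: max_def)
  next
    case False
    then show ?thesis
      using concave_gain_scale_le[OF in_UD(4)[OF U] pos(1), of \<alpha>' w]
      unfolding A_def A'_def by (simp add: max_def)
  qed
  have loss: "\<beta>' * B \<le> \<beta> * B'"
    using concave_loss_scale_ge[OF in_UD(2)[OF U] pos(2) loss_larger]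
    unfolding B_def B'_def .
  have factor: "max \<alpha> \<alpha>' * \<beta> \<le> \<alpha> * \<beta>'"
    using pos loss_larger ratio_smaller by (auto simp: max_def field_simps)
  have "\<alpha> * \<beta> * (\<mu> * A') = \<beta> * \<mu> * (\<alpha> * A')" by simp
  also have "\<dots> \<le> \<beta> * \<mu> * (max \<alpha> \<alpha>' * A)"
    using gain pos \<mu> by (intro mult_left_mono) auto
  also have "\<dots> = \<beta> * max \<alpha> \<alpha>' * (\<mu> * A)" by simp
  also have "\<dots> \<le> \<beta> * max \<alpha> \<alpha>' * ((1 - \<mu>) * B)"
    using hyp pos by (intro mult_left_mono) auto
  also have "\<dots> = (max \<alpha> \<alpha>' * \<beta>) * ((1 - \<mu>) * B)" by simp
  also have "\<dots> \<le> (\<alpha> * \<beta>') * ((1 - \<mu>) * B)"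
    using factor \<mu> \<open>B \<ge> 0\<close> by (intro mult_right_mono) auto
  also have "\<dots> = \<alpha> * (1 - \<mu>) * (\<beta>' * B)" by simp
  also have "\<dots> \<le> \<alpha> * (1 - \<mu>) * (\<beta> * B')"
    using loss pos \<mu> by (intro mult_left_mono) auto
  also have "\<dots> = \<alpha> * \<beta> * ((1 - \<mu>) * B')" by simp
  finally have "\<mu> * A' \<le> (1 - \<mu>) * B'"
    using pos by (simp add: mult_le_cancel_left_pos)
  then show ?thesis
    unfolding safe_pref_iff A'_def B'_def .
qed

lemma strict_mono_affine_plus_min:
  fixes a b c :: real
  assumes "0 < a" "0 \<le> b"
  shows "strict_mono (\<lambda>x. a * x + b * min x c)"
proof (rule strict_monoI)
  fix x y :: real
  assume "x < y"
  then have "b * min x c \<le> b * min y c"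
    using assms by (intro mult_left_mono) auto
  then show "a * x + b * min x c < a * y + b * min y c"
    using \<open>x < y\<close> assms by (smt (verit) mult_strict_left_mono)
qed

lemma concave_on_min_const: "concave_on UNIV (\<lambda>x::real. min x c)"
  unfolding concave_on_iff
proof (intro conjI ballI allI impI)
  fix x y u v :: real
  assume uv: "0 \<le> u" "0 \<le> v" "u + v = 1"
  have "u * min x c \<le> u * x" "v * min y c \<le> v * y" "u * min x c \<le> u * c" "v * min y c \<le> v * c"
    using uv by (auto intro: mult_left_mono)
  moreover have "u * c + v * c = c"
    using uv by (metis distrib_right mult_1)
  ultimately show "u * min x c + v * min y c \<le> min (u *\<^sub>R x + v *\<^sub>R y) c"
    by simp
qed simp

lemma concave_on_affine_plus_min:
  fixes a b c :: real
  assumes "0 \<le> a" "0 \<le> b"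
  shows "concave_on UNIV (\<lambda>x. a * x + b * min x c)"
  using assms concave_on_min_const
  by (intro concave_on_add concave_on_cmul) (auto simp: concave_on_ident)

lemma not_safe_must_remain_optimal_if_ratio_increases:
  assumes pos: "0 < \<alpha>" "0 < \<beta>" "0 < \<alpha>'" "0 < \<beta>'"
    and ratio: "\<alpha> / \<beta> < \<alpha>' / \<beta>'" and "w0 \<in> W"
  shows "\<not> safe_must_remain_optimal \<alpha> \<beta> \<alpha>' \<beta>' W"
proof
  assume opt: "safe_must_remain_optimal \<alpha> \<beta> \<alpha>' \<beta>' W"
  define u where "u = state_utility (\<lambda>x. x / \<beta>) (\<lambda>x. x / \<alpha>)"
  have "strict_mono (\<lambda>x. x / c)" "concave_on UNIV (\<lambda>x. x / c)" if "0 < c" for c :: real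
    using that unfolding concave_on_iff
    by (simp_all add: strict_mono_def divide_strict_right_mono add_divide_distrib)
  then have "in_U u"
    unfolding u_def using pos by (intro in_U_state_utility) auto
  moreover have "\<forall>w\<in>W. safe_pref (1/2) u w \<alpha> \<beta>"
    using pos unfolding u_def safe_pref_half_state_utility_iff by (simp add: field_simps)
  ultimately have "safe_pref (1/2) u w0 \<alpha>' \<beta>'"
    using opt \<open>w0 \<in> W\<close> unfolding safe_must_remain_optimal_def by auto
  then have "\<alpha>' / \<alpha> \<le> \<beta>' / \<beta>"
    unfolding u_def safe_pref_half_state_utility_iff by (simp add: add_divide_distrib diff_divide_distrib)
  then show False
    using pos ratio by (simp add: field_simps)
qed

lemma capped_gain_le_kinked_loss:
  fixes w w0 \<alpha> \<alpha>' \<beta> \<beta>' D :: real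
  assumes "0 \<le> \<alpha>" "0 \<le> \<alpha>'" "0 \<le> \<beta>'" "\<beta>' < \<beta>" "1 \<le> D" "\<alpha> \<le> D * \<beta>"
  shows "min (w + \<alpha>) (w0 + \<alpha>') - min w (w0 + \<alpha>')
    \<le> \<alpha>' + D * (min w (w0 - \<beta>') - min (w - \<beta>) (w0 - \<beta>'))"
proof (cases "w \<le> w0 - \<beta>'")
  case True
  then have "min w (w0 - \<beta>') - min (w - \<beta>) (w0 - \<beta>') = \<beta>"
    using assms by (simp add: min_def)
  then show ?thesis
    using assms by (simp add: min_def)
next
  case False
  define g where "g = max 0 (w0 + \<beta> - \<beta>' - w)"
  have "min w (w0 - \<beta>') - min (w - \<beta>) (w0 - \<beta>') = g"
    using False unfolding g_def by (simp add: min_def max_def)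
  moreover have "g \<le> D * g"
    using assms unfolding g_def by (simp add: mult_le_cancel_right1)
  moreover have "min (w + \<alpha>) (w0 + \<alpha>') - min w (w0 + \<alpha>') \<le> \<alpha>' + g"
    using assms unfolding g_def by (simp add: min_def max_def)
  ultimately show ?thesis
    by simp
qed

lemma not_safe_must_remain_optimal_if_loss_shrinks:
  assumes pos: "0 < \<alpha>" "0 < \<alpha>'" "0 < \<beta>'"
    and shrink: "\<beta>' < \<beta>" and "w0 \<in> W"
  shows "\<not> safe_must_remain_optimal \<alpha> \<beta> \<alpha>' \<beta>' W"
proof
  assume opt: "safe_must_remain_optimal \<alpha> \<beta> \<alpha>' \<beta>' W"
  define k where "k = \<alpha>' / \<beta>'"
  define e where "e = (k * \<beta> - \<alpha>') / \<alpha>"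
  define D where "D = 1 + \<alpha> / \<beta>"
  have k: "k * \<beta>' = \<alpha>'" "0 < k"
    using pos unfolding k_def by auto
  have e: "e * \<alpha> + \<alpha>' = k * \<beta>" "0 < e"
    using pos shrink k unfolding e_def by (auto simp: field_simps)
  have D: "1 \<le> D" "\<alpha> \<le> D * \<beta>"
    using pos shrink unfolding D_def by (auto simp: field_simps)
  define u where
    "u = state_utility (\<lambda>x. k * x + D * min x (w0 - \<beta>')) (\<lambda>x. e * x + 1 * min x (w0 + \<alpha>'))"
  have "in_U u"
    unfolding u_def using k e D
    by (intro in_U_state_utility strict_mono_affine_plus_min concave_on_affine_plus_min) auto
  moreover have "safe_pref (1/2) u w \<alpha> \<beta>" for w
    using capped_gain_le_kinked_loss[of \<alpha> \<alpha>' \<beta>' \<beta> D w w0] pos shrink D e(1)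
    unfolding u_def safe_pref_half_state_utility_iff by (simp add: algebra_simps)
  ultimately have "safe_pref (1/2) u w0 \<alpha>' \<beta>'"
    using opt \<open>w0 \<in> W\<close> unfolding safe_must_remain_optimal_def by auto
  then have "e * \<alpha>' + \<alpha>' \<le> k * \<beta>'"
    unfolding u_def safe_pref_half_state_utility_iff using pos by (simp add: algebra_simps)
  then show False
    using mult_pos_pos[OF e(2) pos(2)] k by linarith
qed

theorem theorem1:
  fixes \<alpha> \<beta> \<alpha>' \<beta>' :: real and W :: "real set"
  assumes "\<alpha> > 0" "\<beta> > 0" "\<alpha>' > 0" "\<beta>' > 0" "W \<noteq> {}"
  shows "safe_must_remain_optimal \<alpha> \<beta> \<alpha>' \<beta>' W \<longleftrightarrow> risky_becomes_worse \<alpha> \<beta> \<alpha>' \<beta>'"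
proof
  assume "risky_becomes_worse \<alpha> \<beta> \<alpha>' \<beta>'"
  then have "\<beta> \<le> \<beta>'" "\<alpha>' / \<beta>' \<le> \<alpha> / \<beta>"
    unfolding risky_becomes_worse_def by auto
  then show "safe_must_remain_optimal \<alpha> \<beta> \<alpha>' \<beta>' W"
    unfolding safe_must_remain_optimal_def
    using safe_pref_transfer[OF _ _ _ assms(1-3)] by simp
next
  assume opt: "safe_must_remain_optimal \<alpha> \<beta> \<alpha>' \<beta>' W"
  obtain w0 where w0: "w0 \<in> W"
    using assms(5) by blast
  have "\<not> \<beta>' < \<beta>"
    using not_safe_must_remain_optimal_if_loss_shrinks[OF assms(1,3,4) _ w0] opt by blast
  moreover have "\<not> \<alpha> / \<beta> < \<alpha>' / \<beta>'"
    using not_safe_must_remain_optimal_if_ratio_increases[OF assms(1-4) _ w0] opt by blast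
  ultimately show "risky_becomes_worse \<alpha> \<beta> \<alpha>' \<beta>'"
    unfolding risky_becomes_worse_def by simp
qed

end
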